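(* Let $V$ be a commutative $\mathbb C$-algebra of functions of $x$ closed under $\partial_x$, $\mathbf t=(t_0=x,t_1,\dots)$, $u(\mathbf t)\in V[[t_1,t_2,\dots]]$ a solution of the KdV hierarchy, and $(\psi,\psi^* )$ a pair of wave functions of $u$. Let $$\Psi(z,\mathbf t)=\begin{pmatrix}\psi(z,\mathbf t)&\psi^*(z,\mathbf t)\\-\partial_x\psi(z,\mathbf t)&-\partial_x\psi^*(z,\mathbf t)\end{pmatrix}.$$ Then $\det\Psi(z,\mathbf t)=2z$, $b(z^2,\mathbf t)=\psi(z,\mathbf t)\psi^*(z,\mathbf t)$, and $$R(z^2,\mathbf t)=-\Psi(z,\mathbf t)\begin{pmatrix}z&0\\0&-z\end{pmatrix}\Psi(z,\mathbf t)^{-1},$$ where all products are formed with the exponential factors cancelling.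
   Context: KdV hierarchy: $L=\partial_x^2+2u$, $A_k=\frac1{(2k+1)!!}(L^{(2k+1)/2})_+$; $\partial L/\partial t_k=[A_k,L]$ for all $k$. $b(\lambda,\mathbf t)=\sum_{k\ge-1}b_k(\mathbf t)\lambda^{-k-1}$, $b_{-1}=1$, is the unique such series with coefficients in $V[[t_{>0}]]$ satisfying $bb_{xx}-\frac12b_x^2-2(\lambda-2u)b^2=-2\lambda$, and the basic matrix resolvent of $u$ is $R(\lambda,\mathbf t)=\begin{pmatrix}\frac12b_x&b\\(\lambda-2u)b-\frac12b_{xx}&-\frac12b_x\end{pmatrix}$. Wave functions: fix $\widetilde V$ with $V\subseteq\partial_x\widetilde V\subseteq\widetilde V$, $\xi=\sum_kt_kz^{2k+1}/(2k+1)!!$. A wave function is $\psi=(1+\sum_{m\ge1}\phi_m(\mathbf t)z^{-m})e^{\xi}$, $\phi_m\in\widetilde V[[t_{>0}]]$, with $L\psi=z^2\psi$, $\partial_{t_k}\psi=A_k\psi$; its dual is the unique $\psi^*=(1+\sum_{m\ge1}\phi^*_m(\mathbf t)z^{-m})e^{-\xi}$ with $L\psi^*=z^2\psi^*$, $\partial_{t_k}\psi^*=A_k\psi^*$, and with $\partial_x^i(\psi)\psi^*$ (exponentials cancelling) having zero $z^{-1}$-coefficient for every $i\ge0$; $(\psi,\psi^* )$ is then a pair of wave functions. *)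

theory Defs
  imports "HOL-Analysis.Analysis" "HOL-Computational_Algebra.Formal_Laurent_Series"
          "HOL-Library.Poly_Mapping"
begin

text \<open>A multi-index alpha :: nat =>0 nat gives the exponent of t_(k+1) at key k.
  Elements of V~[[t_1,t_2,...]] are represented as functions (nat =>0 nat) => 'v.\<close>

definition ps_mult :: "((nat \<Rightarrow>\<^sub>0 nat) \<Rightarrow> 'v::comm_ring_1) \<Rightarrow> ((nat \<Rightarrow>\<^sub>0 nat) \<Rightarrow> 'v)
                        \<Rightarrow> (nat \<Rightarrow>\<^sub>0 nat) \<Rightarrow> 'v" where
  "ps_mult f g \<alpha> = (\<Sum>p \<in> {p. fst p + snd p = \<alpha>}. f (fst p) * g (snd p))"

definition ps_const :: "'v::zero \<Rightarrow> (nat \<Rightarrow>\<^sub>0 nat) \<Rightarrow> 'v" where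
  "ps_const a \<alpha> = (if \<alpha> = 0 then a else 0)"

text \<open>partial derivative with respect to t_(k+1)\<close>
definition ps_dt :: "nat \<Rightarrow> ((nat \<Rightarrow>\<^sub>0 nat) \<Rightarrow> 'v::comm_ring_1) \<Rightarrow> (nat \<Rightarrow>\<^sub>0 nat) \<Rightarrow> 'v" where
  "ps_dt k f \<alpha> = of_nat (Poly_Mapping.lookup \<alpha> k + 1) * f (\<alpha> + Poly_Mapping.single k 1)"

definition ps_dx :: "('v \<Rightarrow> 'v) \<Rightarrow> ((nat \<Rightarrow>\<^sub>0 nat) \<Rightarrow> 'v) \<Rightarrow> (nat \<Rightarrow>\<^sub>0 nat) \<Rightarrow> 'v" where
  "ps_dx d f \<alpha> = d (f \<alpha>)"

text \<open>Laurent series with finitely many positive powers of z (resp. lambda) are represented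
  as fls in the variable X = z^(-1) (resp. lambda^(-1)); z itself is fls_X_inv.\<close>

definition fls_dmap :: "('r::zero \<Rightarrow> 'r) \<Rightarrow> 'r fls \<Rightarrow> 'r fls" where
  "fls_dmap d f = Abs_fls (\<lambda>n. d (fls_nth f n))"

text \<open>substitution lambda := z^2, i.e. X := X^2\<close>
definition fls_subst_sq :: "'r::zero fls \<Rightarrow> 'r fls" where
  "fls_subst_sq f = Abs_fls (\<lambda>n. if even n then fls_nth f (n div 2) else 0)"

text \<open>A pseudo-differential operator sum_(i<=N) a_i d^i is represented as an fls in the
  variable d^(-1): the coefficient of d^i is fls_nth P (-i).\<close>

definition pd_coeff :: "'r::zero fls \<Rightarrow> int \<Rightarrow> 'r" where
  "pd_coeff P i = fls_nth P (- i)"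

definition pd_of :: "(int \<Rightarrow> 'r::zero) \<Rightarrow> 'r fls" where
  "pd_of f = Abs_fls (\<lambda>n. f (- n))"

definition pd_top :: "'r::zero fls \<Rightarrow> int" where
  "pd_top P = - fls_subdegree P"

definition ibinom :: "int \<Rightarrow> nat \<Rightarrow> int" where
  "ibinom i l = (\<Prod>s<l. i - int s) div int (fact l)"

text \<open>composition: (a d^i)(b d^j) = sum_(l>=0) binom(i,l) a b^(l) d^(i+j-l)\<close>
definition pd_mult :: "('r::comm_ring_1 \<Rightarrow> 'r) \<Rightarrow> 'r fls \<Rightarrow> 'r fls \<Rightarrow> 'r fls" where
  "pd_mult d P Q = pd_of (\<lambda>m.
     \<Sum>i \<in> {m - pd_top Q .. pd_top P}. \<Sum>l \<in> {0 .. nat (pd_top P + pd_top Q - m)}.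
        of_int (ibinom i l) * pd_coeff P i * (d ^^ l) (pd_coeff Q (m - i + int l)))"

definition pd_one :: "'r::{zero,one} fls" where
  "pd_one = pd_of (\<lambda>i. if i = 0 then 1 else 0)"

definition pd_pow :: "('r::comm_ring_1 \<Rightarrow> 'r) \<Rightarrow> 'r fls \<Rightarrow> nat \<Rightarrow> 'r fls" where
  "pd_pow d P n = (pd_mult d P ^^ n) pd_one"

definition pd_plus :: "'r::zero fls \<Rightarrow> 'r fls" where
  "pd_plus P = pd_of (\<lambda>i. if i \<ge> 0 then pd_coeff P i else 0)"

definition pd_smult :: "'r::comm_ring_1 \<Rightarrow> 'r fls \<Rightarrow> 'r fls" where
  "pd_smult c P = pd_of (\<lambda>i. c * pd_coeff P i)"

definition kdvL :: "'r::comm_ring_1 \<Rightarrow> 'r fls" where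
  "kdvL u = pd_of (\<lambda>i. if i = 2 then 1 else if i = 0 then 2 * u else 0)"

definition kdv_sqrtL :: "('r::comm_ring_1 \<Rightarrow> 'r) \<Rightarrow> 'r \<Rightarrow> 'r fls" where
  "kdv_sqrtL d u = (THE Q. pd_coeff Q 1 = 1 \<and> (\<forall>i>1. pd_coeff Q i = 0) \<and> pd_mult d Q Q = kdvL u)"

definition dfact_odd :: "nat \<Rightarrow> nat" where
  "dfact_odd k = (\<Prod>i\<in>{0..k}. 2 * i + 1)"

text \<open>A_k = (L^((2k+1)/2))_+ / (2k+1)!!; kappa embeds the complex scalars\<close>
definition kdvA :: "('r::comm_ring_1 \<Rightarrow> 'r) \<Rightarrow> (complex \<Rightarrow> 'r) \<Rightarrow> 'r \<Rightarrow> nat \<Rightarrow> 'r fls" where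
  "kdvA d \<kappa> u k = pd_smult (\<kappa> (1 / of_nat (dfact_odd k)))
                      (pd_plus (pd_pow d (kdv_sqrtL d u) (2 * k + 1)))"

text \<open>u solves the KdV hierarchy: dL/dt_k = [A_k, L] for all k (D 0 = d/dx, D k = d/dt_k)\<close>
definition kdv_solution :: "(nat \<Rightarrow> 'r::comm_ring_1 \<Rightarrow> 'r) \<Rightarrow> (complex \<Rightarrow> 'r) \<Rightarrow> 'r \<Rightarrow> bool" where
  "kdv_solution D \<kappa> u \<longleftrightarrow> (\<forall>k. fls_dmap (D k) (kdvL u) =
      pd_mult (D 0) (kdvA (D 0) \<kappa> u k) (kdvL u) - pd_mult (D 0) (kdvL u) (kdvA (D 0) \<kappa> u k))"

text \<open>The series b(lambda) = sum_(k>=-1) b_k lambda^(-k-1), as fls in lambda^(-1)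
  (fls_nth b n = b_(n-1)), with coefficients in the set S (= V[[t_>0]]).\<close>
definition kdv_b :: "('r::comm_ring_1 \<Rightarrow> 'r) \<Rightarrow> (complex \<Rightarrow> 'r) \<Rightarrow> 'r set \<Rightarrow> 'r \<Rightarrow> 'r fls" where
  "kdv_b d \<kappa> S u = (THE b. (\<forall>n. fls_nth b n \<in> S) \<and> (\<forall>n<0. fls_nth b n = 0) \<and> fls_nth b 0 = 1 \<and>
      b * fls_dmap d (fls_dmap d b) - fls_const (\<kappa> (1/2)) * (fls_dmap d b)^2
        - 2 * (fls_X_inv - 2 * fls_const u) * b^2 = - 2 * fls_X_inv)"

definition mat2 :: "'a \<Rightarrow> 'a \<Rightarrow> 'a \<Rightarrow> 'a \<Rightarrow> 'a^2^2" where
  "mat2 a b c e = (\<chi> i j. if i = 1 then (if j = 1 then a else b) else (if j = 1 then c else e))"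

definition kdv_R :: "('r::comm_ring_1 \<Rightarrow> 'r) \<Rightarrow> (complex \<Rightarrow> 'r) \<Rightarrow> 'r set \<Rightarrow> 'r \<Rightarrow> 'r fls^2^2" where
  "kdv_R d \<kappa> S u = (let b = kdv_b d \<kappa> S u; h = fls_const (\<kappa> (1/2)) in
     mat2 (h * fls_dmap d b) b
          ((fls_X_inv - 2 * fls_const u) * b - h * fls_dmap d (fls_dmap d b)) (- h * fls_dmap d b))"

text \<open>For psi = w e^(c-part), with c = z for psi and c = -z for psi*, the derivative d/dx
  of psi corresponds to w |-> d w + c w.\<close>
definition shift_op :: "('r::comm_ring_1 \<Rightarrow> 'r) \<Rightarrow> 'r fls \<Rightarrow> 'r fls \<Rightarrow> 'r fls" where
  "shift_op d c f = fls_dmap d f + c * f"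

text \<open>application of a differential operator sum_(i>=0) a_i d^i, conjugated by the exponential\<close>
definition conj_apply :: "('r::comm_ring_1 \<Rightarrow> 'r) \<Rightarrow> 'r fls \<Rightarrow> 'r fls \<Rightarrow> 'r fls \<Rightarrow> 'r fls" where
  "conj_apply d c A w = (\<Sum>i\<in>{0..nat (pd_top A)}. fls_const (pd_coeff A (int i)) * (shift_op d c ^^ i) w)"

text \<open>w e^(+-xi) with xi = sum_k t_k z^(2k+1)/(2k+1)!! satisfies L psi = z^2 psi and
  d psi/d t_k = A_k psi; c = fls_X_inv (= z) for e^xi, c = - fls_X_inv for e^(-xi).\<close>
definition wave_eqs :: "(nat \<Rightarrow> 'r::comm_ring_1 \<Rightarrow> 'r) \<Rightarrow> (complex \<Rightarrow> 'r) \<Rightarrow> 'r \<Rightarrow> 'r fls \<Rightarrow> 'r fls \<Rightarrow> bool" where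
  "wave_eqs D \<kappa> u c w \<longleftrightarrow>
     (\<forall>n<0. fls_nth w n = 0) \<and> fls_nth w 0 = 1 \<and>
     conj_apply (D 0) c (kdvL u) w = fls_X_inv ^ 2 * w \<and>
     (\<forall>k. fls_dmap (D k) w + c ^ (2 * k + 1) * fls_const (\<kappa> (1 / of_nat (dfact_odd k))) * w
            = conj_apply (D 0) c (kdvA (D 0) \<kappa> u k) w)"

definition is_wave_function :: "(nat \<Rightarrow> 'r::comm_ring_1 \<Rightarrow> 'r) \<Rightarrow> (complex \<Rightarrow> 'r) \<Rightarrow> 'r \<Rightarrow> 'r fls \<Rightarrow> bool" where
  "is_wave_function D \<kappa> u w \<longleftrightarrow> wave_eqs D \<kappa> u fls_X_inv w"

definition is_wave_pair :: "(nat \<Rightarrow> 'r::comm_ring_1 \<Rightarrow> 'r) \<Rightarrow> (complex \<Rightarrow> 'r) \<Rightarrow> 'r \<Rightarrow> 'r fls \<Rightarrow> 'r fls \<Rightarrow> bool" where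
  "is_wave_pair D \<kappa> u w ws \<longleftrightarrow> is_wave_function D \<kappa> u w \<and> wave_eqs D \<kappa> u (- fls_X_inv) ws \<and>
     (\<forall>i. fls_nth ((shift_op (D 0) fls_X_inv ^^ i) w * ws) 1 = 0)"

text \<open>Psi with the exponential factors stripped (Psi = PsiHat * diag(e^xi, e^-xi))\<close>
definition wave_matrix :: "('r::comm_ring_1 \<Rightarrow> 'r) \<Rightarrow> 'r fls \<Rightarrow> 'r fls \<Rightarrow> 'r fls^2^2" where
  "wave_matrix d w ws = mat2 w ws (- shift_op d fls_X_inv w) (- shift_op d (- fls_X_inv) ws)"

end

theory Submission
  imports Defs
begin

text \<open>Strip the exponentials: \<open>\<psi> = w e\<^sup>\<xi>\<close>, \<open>\<psi>\<^sup>* = ws e\<^sup>-\<^sup>\<xi>\<close>, with \<open>w_x\<close>, \<open>ws_x\<close>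
  the stripped \<open>\<partial>\<^sub>x\<psi>\<close>, \<open>\<partial>\<^sub>x\<psi>\<^sup>*\<close>. Since \<open>L \<psi> = z\<^sup>2 \<psi>\<close>, multiplication by \<open>z\<^sup>2\<close> preserves the
  constant-coefficient span of the \<open>\<partial>\<^sup>j \<psi>\<close>, so the pairing condition (vanishing \<open>z\<^sup>-\<^sup>1\<close>-coefficient
  of \<open>\<partial>\<^sup>j\<psi> \<psi>\<^sup>*\<close>) spreads to all odd negative powers of \<open>z\<close>: \<open>f = \<psi> \<psi>\<^sup>*\<close> and
  \<open>\<partial>\<psi> \<psi>\<^sup>*\<close> are even in \<open>z\<close>. A direct computation gives the Riccati identity
  \<open>f f'' - f'\<^sup>2/2 - 2 (z\<^sup>2 - 2 u) f\<^sup>2 = - W\<^sup>2/2\<close> for the Wronskian \<open>W = det \<Psi>\<close>, so \<open>W\<^sup>2\<close> is even;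
  as \<open>W - 2 z\<close> is an even power series, this forces \<open>W = 2 z\<close>. Hence \<open>f\<close> is a series \<open>b(z\<^sup>2)\<close>
  solving the defining equation of \<open>b\<close>, whose coefficients are determined recursively (which also
  puts them in \<open>V[[t]]\<close>). The resolvent formula is then a \<open>2 \<times> 2\<close> computation using
  \<open>f'' = 2 z\<^sup>2 f - 4 u f + 2 \<partial>\<psi> \<partial>\<psi>\<^sup>*\<close>.\<close>

lemma fls_times_nth_bounded:
  fixes f g :: "'a::comm_ring_1 fls"
  assumes "\<And>i. i < a \<Longrightarrow> fls_nth f i = 0" and "\<And>i. i < b \<Longrightarrow> fls_nth g i = 0"
  shows "fls_nth (f * g) n = (\<Sum>i=a..n-b. fls_nth f i * fls_nth g (n - i))"
proof (cases "f = 0 \<or> g = 0")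
  case True
  then show ?thesis by auto
next
  case False
  then have "a \<le> fls_subdegree f" and "b \<le> fls_subdegree g"
    using fls_subdegree_geI assms by blast+
  then show ?thesis
    unfolding fls_times_nth(2) by (intro sum.mono_neutral_left) auto
qed

lemma fls_X_inv_power_times_nth:
  "fls_nth (fls_X_inv ^ k * (f::'a::comm_ring_1 fls)) n = fls_nth f (n + int k)"
  by (simp add: fls_X_inv_power_times_conv_shift)

lemma fls_X_inv_times_nth: "fls_nth (fls_X_inv * (f::'a::comm_ring_1 fls)) n = fls_nth f (n + 1)"
  using fls_X_inv_power_times_nth[of 1 f n] by simp

lemma fls_X_inv_times_X: "fls_X_inv * (fls_X :: 'a::comm_ring_1 fls) = 1"
  by (rule fls_eqI) (simp add: fls_X_inv_times_conv_shift)

lemma int_nonneg_less_induct [case_names neg nonneg]: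
  fixes n :: int
  assumes neg: "\<And>n. n < 0 \<Longrightarrow> P n"
    and nonneg: "\<And>n. 0 \<le> n \<Longrightarrow> (\<And>m. m < n \<Longrightarrow> P m) \<Longrightarrow> P n"
  shows "P n"
proof -
  have "P (int k)" for k
  proof (induction k rule: less_induct)
    case (less k)
    show ?case
    proof (rule nonneg)
      fix m assume "m < int k"
      then show "P m"
        using less neg by (cases "m < 0") (auto, metis nat_less_iff not_less int_nat_eq)
    qed simp
  qed
  then show ?thesis
    using neg by (cases "n < 0") (auto, metis int_nat_eq not_less)
qed

lemma fls_const_numeral_times: "fls_const (numeral k * c) = numeral k * fls_const (c::'a::comm_ring_1)"
  by (metis fls_const_mult_const fls_const_numeral)

definition fls_is_fps :: "'a::zero fls \<Rightarrow> bool" where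
  "fls_is_fps f \<longleftrightarrow> (\<forall>n<0. fls_nth f n = 0)"

lemma fls_is_fps_times_nth:
  fixes f g :: "'a::comm_ring_1 fls"
  assumes "fls_is_fps f" and "fls_is_fps g"
  shows "fls_nth (f * g) n = (\<Sum>i=0..n. fls_nth f i * fls_nth g (n - i))"
  using assms fls_times_nth_bounded[of 0 f 0 g n] unfolding fls_is_fps_def by simp

lemma fls_is_fps_times:
  fixes f g :: "'a::comm_ring_1 fls"
  assumes "fls_is_fps f" and "fls_is_fps g"
  shows "fls_is_fps (f * g)"
  using fls_is_fps_times_nth[OF assms] unfolding fls_is_fps_def by simp

lemma fls_is_fps_times_nth_0:
  fixes f g :: "'a::comm_ring_1 fls"
  assumes "fls_is_fps f" and "fls_is_fps g"
  shows "fls_nth (f * g) 0 = fls_nth f 0 * fls_nth g 0"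
  using fls_is_fps_times_nth[OF assms, of 0] by simp

lemma fls_is_fps_times_nth_cong:
  fixes F G F' G' :: "'a::comm_ring_1 fls"
  assumes "fls_is_fps F" "fls_is_fps G" "fls_is_fps F'" "fls_is_fps G'"
    and "\<And>j. j < n \<Longrightarrow> fls_nth F j = fls_nth F' j" and "\<And>j. j < n \<Longrightarrow> fls_nth G j = fls_nth G' j"
    and "m < n"
  shows "fls_nth (F * G) m = fls_nth (F' * G') m"
  unfolding fls_is_fps_times_nth[OF assms(1,2)] fls_is_fps_times_nth[OF assms(3,4)]
  using assms(5-7) by (intro sum.cong) auto

definition fls_even :: "'a::zero fls \<Rightarrow> bool" where
  "fls_even f \<longleftrightarrow> (\<forall>n. odd n \<longrightarrow> fls_nth f n = 0)"

lemma fls_even_const: "fls_even (fls_const c)"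
  by (auto simp: fls_even_def)

lemma fls_even_numeral: "fls_even (numeral k :: 'a::comm_ring_1 fls)"
  by (metis fls_const_numeral fls_even_const)

lemma fls_even_X_inv_power2: "fls_even ((fls_X_inv :: 'a::comm_ring_1 fls) ^ 2)"
  by (simp add: fls_even_def)

lemma fls_even_uminus: "fls_even (f::'a::comm_ring_1 fls) \<Longrightarrow> fls_even (- f)"
  by (simp add: fls_even_def)

lemma fls_even_diff: "fls_even f \<Longrightarrow> fls_even g \<Longrightarrow> fls_even (f - g :: 'a::comm_ring_1 fls)"
  by (simp add: fls_even_def)

lemma fls_even_mult:
  fixes f g :: "'a::comm_ring_1 fls"
  assumes "fls_even f" and "fls_even g"
  shows "fls_even (f * g)"
  unfolding fls_even_def
proof (intro allI impI)
  fix n :: int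
  assume "odd n"
  then have "fls_nth f i * fls_nth g (n - i) = 0" for i
    using assms by (cases "odd i") (auto simp: fls_even_def)
  then show "fls_nth (f * g) n = 0"
    unfolding fls_times_nth(2) by simp
qed

lemma fls_even_power2: "fls_even (f::'a::comm_ring_1 fls) \<Longrightarrow> fls_even (f ^ 2)"
  by (simp add: power2_eq_square fls_even_mult)

lemma fls_even_X_inv_times_imp_eq_0:
  fixes f :: "'a::comm_ring_1 fls"
  assumes "fls_even (fls_X_inv * f)" and "fls_even f"
  shows "f = 0"
proof (rule fls_eqI)
  fix n
  show "fls_nth f n = fls_nth 0 n"
    using assms fls_X_inv_times_nth[of f "n - 1"] unfolding fls_even_def
    by (cases "odd n") auto
qed

lemma fls_subst_sq_nth: "fls_nth (fls_subst_sq f) n = (if even n then fls_nth f (n div 2) else 0)"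
proof -
  have "\<forall>\<^sub>\<infinity>n. (if even (- int n) then fls_nth f (- int n div 2) else 0) = 0"
    unfolding MOST_nat
  proof (intro exI allI impI)
    fix n assume "n > 2 * nat (- fls_subdegree f)"
    then show "(if even (- int n) then fls_nth f (- int n div 2) else 0) = 0"
      by (auto elim!: evenE)
  qed
  then show ?thesis unfolding fls_subst_sq_def by simp
qed

lemma fls_subst_sq_inject: "fls_subst_sq f = fls_subst_sq g \<Longrightarrow> f = g"
  by (rule fls_eqI) (metis fls_subst_sq_nth even_mult_iff even_numeral nonzero_mult_div_cancel_left
      zero_neq_numeral)

lemma fls_subst_sq_uminus: "fls_subst_sq (- (f::'a::comm_ring_1 fls)) = - fls_subst_sq f"
  by (rule fls_eqI) (simp add: fls_subst_sq_nth)

lemma fls_subst_sq_diff: "fls_subst_sq (f - (g::'a::comm_ring_1 fls)) = fls_subst_sq f - fls_subst_sq g"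
  by (rule fls_eqI) (simp add: fls_subst_sq_nth)

lemma fls_subst_sq_const: "fls_subst_sq (fls_const c) = fls_const c"
  by (rule fls_eqI) (auto simp: fls_subst_sq_nth)

lemma fls_subst_sq_numeral: "fls_subst_sq (numeral k :: 'a::comm_ring_1 fls) = numeral k"
  using fls_subst_sq_const[of "numeral k :: 'a"] by simp

lemma fls_subst_sq_X_inv: "fls_subst_sq (fls_X_inv :: 'a::comm_ring_1 fls) = fls_X_inv ^ 2"
  by (rule fls_eqI) (auto simp: fls_subst_sq_nth)

lemma sum_even_reindex:
  fixes F :: "int \<Rightarrow> 'a::comm_monoid_add"
  assumes "\<And>i. odd i \<Longrightarrow> F i = 0"
  shows "(\<Sum>i=2*a..2*m. F i) = (\<Sum>j=a..m. F (2 * j))"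
proof -
  have "(\<Sum>i=2*a..2*m. F i) = (\<Sum>i\<in>(\<lambda>j. 2 * j) ` {a..m}. F i)"
  proof (rule sum.mono_neutral_right)
    show "\<forall>i\<in>{2*a..2*m} - (\<lambda>j. 2 * j) ` {a..m}. F i = 0"
    proof
      fix i assume i: "i \<in> {2*a..2*m} - (\<lambda>j. 2 * j) ` {a..m}"
      have "odd i"
      proof
        assume "even i"
        then obtain j where "i = 2 * j" by (rule evenE)
        with i show False by auto
      qed
      then show "F i = 0" by (rule assms)
    qed
  qed auto
  also have "\<dots> = (\<Sum>j=a..m. F (2 * j))"
    by (subst sum.reindex) (auto simp: inj_on_def)
  finally show ?thesis .
qed

lemma fls_subst_sq_mult: "fls_subst_sq (f * g) = fls_subst_sq f * fls_subst_sq (g::'a::comm_ring_1 fls)"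
proof (rule fls_eqI)
  fix n
  define a where "a = fls_subdegree f"
  define b where "b = fls_subdegree g"
  define F where "F i = fls_nth (fls_subst_sq f) i * fls_nth (fls_subst_sq g) (n - i)" for i
  have "fls_nth (fls_subst_sq f * fls_subst_sq g) n = (\<Sum>i=2*a..n-2*b. F i)"
    unfolding F_def a_def b_def by (rule fls_times_nth_bounded) (auto simp: fls_subst_sq_nth)
  moreover have "F i = 0" if "odd n \<or> odd i" for i
    using that by (cases "odd i") (auto simp: F_def fls_subst_sq_nth)
  moreover have "fls_nth (f * g) m = (\<Sum>j=a..m-b. F (2 * j))" if "n = 2 * m" for m
    unfolding fls_times_nth(2) F_def a_def b_def that by (intro sum.cong) (auto simp: fls_subst_sq_nth)
  ultimately show "fls_nth (fls_subst_sq (f * g)) n = fls_nth (fls_subst_sq f * fls_subst_sq g) n"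
  proof (cases "even n")
    case True
    then obtain m where "n = 2 * m" by (rule evenE)
    moreover have "n - 2 * b = 2 * (m - b)" using \<open>n = 2 * m\<close> by simp
    ultimately show ?thesis
      using \<open>\<And>i. odd n \<or> odd i \<Longrightarrow> F i = 0\<close> sum_even_reindex[of F a "m - b"]
        \<open>fls_nth (fls_subst_sq f * fls_subst_sq g) n = (\<Sum>i=2*a..n-2*b. F i)\<close>
        \<open>\<And>m. n = 2 * m \<Longrightarrow> fls_nth (f * g) m = (\<Sum>j=a..m-b. F (2 * j))\<close>
      by (simp add: fls_subst_sq_nth)
  qed (auto simp: fls_subst_sq_nth)
qed

lemma fls_subst_sq_power2: "fls_subst_sq ((f::'a::comm_ring_1 fls) ^ 2) = fls_subst_sq f ^ 2"
  by (simp add: power2_eq_square fls_subst_sq_mult)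

definition fls_subst_sqrt :: "'a::zero fls \<Rightarrow> 'a fls" where
  "fls_subst_sqrt f = Abs_fls (\<lambda>n. fls_nth f (2 * n))"

lemma fls_subst_sqrt_nth: "fls_nth (fls_subst_sqrt f) n = fls_nth f (2 * n)"
proof -
  have "\<forall>\<^sub>\<infinity>n. fls_nth f (2 * - int n) = 0"
    unfolding MOST_nat by (rule exI[of _ "nat (- fls_subdegree f)"]) auto
  then show ?thesis unfolding fls_subst_sqrt_def by simp
qed

lemma fls_subst_sq_sqrt: "fls_even f \<Longrightarrow> fls_subst_sq (fls_subst_sqrt f) = f"
  by (rule fls_eqI) (auto simp: fls_subst_sq_nth fls_subst_sqrt_nth fls_even_def elim!: evenE)

lemma eq_of_linear_combination:
  fixes A B :: "'a::comm_ring_1"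
  assumes "a\<^sub>1 = b\<^sub>1" "a\<^sub>2 = b\<^sub>2" and "A - B = c\<^sub>1 * (a\<^sub>1 - b\<^sub>1) + c\<^sub>2 * (a\<^sub>2 - b\<^sub>2)"
  shows "A = B"
  using assms by simp

lemma mat2_mult:
  "mat2 a b c d ** mat2 a' b' c' d'
    = mat2 (a * a' + b * c') (a * b' + b * d') (c * a' + d * c') (c * b' + d * d')"
  by (simp add: mat2_def matrix_matrix_mult_def vec_eq_iff sum_2 forall_2)

lemma mat2_uminus: "- mat2 a b c d = mat2 (- a) (- b) (- c) (- (d::'a::ring_1))"
  by (simp add: mat2_def vec_eq_iff forall_2)

lemma mat_1_eq_mat2: "mat 1 = mat2 (1::'a::ring_1) 0 0 1"
  by (simp add: mat2_def mat_def vec_eq_iff forall_2)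

lemma mat2_eq_iff: "mat2 a b c d = mat2 a' b' c' d' \<longleftrightarrow> a = a' \<and> b = b' \<and> c = c' \<and> d = d'"
  by (auto simp: mat2_def vec_eq_iff forall_2)

lemma vec_lambda_mat2: "(\<chi> i j. g (mat2 a b c d $ i $ j)) = mat2 (g a) (g b) (g c) (g d)"
  by (simp add: mat2_def vec_eq_iff forall_2)

lemma det_mat2: "det (mat2 a b c (d::'a::comm_ring_1)) = a * d - b * c"
  by (simp add: det_2 mat2_def)

lemma mat2_adjugate_inverse:
  fixes a b c d s :: "'a::comm_ring_1"
  assumes "s * (a * d - b * c) = 1"
  shows "mat2 a b c d ** mat2 (s * d) (- (s * b)) (- (s * c)) (s * a) = mat 1"
    and "mat2 (s * d) (- (s * b)) (- (s * c)) (s * a) ** mat2 a b c d = mat 1"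
proof -
  have "a * (s * d) + b * - (s * c) = 1" "c * - (s * b) + d * (s * a) = 1"
    "s * d * a + - (s * b) * c = 1" "- (s * c) * b + s * a * d = 1"
    using assms by (simp_all add: algebra_simps)
  then show "mat2 a b c d ** mat2 (s * d) (- (s * b)) (- (s * c)) (s * a) = mat 1"
    and "mat2 (s * d) (- (s * b)) (- (s * c)) (s * a) ** mat2 a b c d = mat 1"
    unfolding mat2_mult mat_1_eq_mat2 mat2_eq_iff by (simp_all add: algebra_simps)
qed

lemma matrix_mul_matrix_inv:
  assumes "invertible (A::'a::semiring_1^'n^'n)"
  shows "A ** matrix_inv A = mat 1"
  using someI_ex[OF assms[unfolded invertible_def]] unfolding matrix_inv_def by blast

lemma matrix_mul_uminus_left: "(- A) ** B = - (A ** (B::'a::ring_1^'n^'m))"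
  by (simp add: matrix_matrix_mult_def vec_eq_iff sum_negf)

locale derivation = additive \<delta> for \<delta> :: "'r::comm_ring_1 \<Rightarrow> 'r" +
  assumes mult: "\<delta> (a * b) = a * \<delta> b + \<delta> a * b"
begin

declare zero [simp]

lemma one [simp]: "\<delta> 1 = 0"
  using mult[of 1 1] by simp

lemma fls_dmap_nth [simp]: "fls_nth (fls_dmap \<delta> f) n = \<delta> (fls_nth f n)"
proof -
  have "\<forall>\<^sub>\<infinity>n. \<delta> (fls_nth f (- int n)) = 0"
    using MOST_fls_neg_nth_eq_0[of f] by (rule eventually_mono) simp
  then show ?thesis unfolding fls_dmap_def by simp
qed

lemma fls_dmap_add [simp]: "fls_dmap \<delta> (f + g) = fls_dmap \<delta> f + fls_dmap \<delta> g"
  by (simp add: fls_eq_iff add)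

lemma fls_dmap_uminus [simp]: "fls_dmap \<delta> (- f) = - fls_dmap \<delta> f"
  by (simp add: fls_eq_iff minus)

lemma fls_dmap_diff [simp]: "fls_dmap \<delta> (f - g) = fls_dmap \<delta> f - fls_dmap \<delta> g"
  by (simp add: fls_eq_iff diff)

lemma fls_dmap_zero [simp]: "fls_dmap \<delta> 0 = 0"
  by (simp add: fls_eq_iff)

lemma fls_dmap_const [simp]: "fls_dmap \<delta> (fls_const c) = fls_const (\<delta> c)"
  by (simp add: fls_eq_iff)

lemma fls_dmap_X_inv [simp]: "fls_dmap \<delta> fls_X_inv = 0"
  by (simp add: fls_eq_iff)

lemma fls_dmap_X_inv_power_times [simp]:
  "fls_dmap \<delta> (fls_X_inv ^ k * f) = fls_X_inv ^ k * fls_dmap \<delta> f"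
  by (simp add: fls_eq_iff fls_X_inv_power_times_nth)

lemma fls_dmap_X_inv_times [simp]: "fls_dmap \<delta> (fls_X_inv * f) = fls_X_inv * fls_dmap \<delta> f"
  using fls_dmap_X_inv_power_times[of 1 f] by simp

lemma fls_dmap_mult: "fls_dmap \<delta> (f * g) = f * fls_dmap \<delta> g + fls_dmap \<delta> f * g"
proof (rule fls_eqI)
  fix n
  define a where "a = fls_subdegree f"
  define b where "b = fls_subdegree g"
  have f: "\<And>i. i < a \<Longrightarrow> fls_nth f i = 0" and g: "\<And>i. i < b \<Longrightarrow> fls_nth g i = 0"
    unfolding a_def b_def by auto
  have "fls_nth (fls_dmap \<delta> (f * g)) n = \<delta> (\<Sum>i=a..n-b. fls_nth f i * fls_nth g (n - i))"
    using fls_times_nth_bounded[OF f g] by simp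
  also have "\<dots> = (\<Sum>i=a..n-b. fls_nth f i * fls_nth (fls_dmap \<delta> g) (n - i))
      + (\<Sum>i=a..n-b. fls_nth (fls_dmap \<delta> f) i * fls_nth g (n - i))"
    by (simp add: sum mult sum.distrib)
  also have "\<dots> = fls_nth (f * fls_dmap \<delta> g + fls_dmap \<delta> f * g) n"
    using f g by (simp add: fls_times_nth_bounded[of a _ b])
  finally show "fls_nth (fls_dmap \<delta> (f * g)) n = fls_nth (f * fls_dmap \<delta> g + fls_dmap \<delta> f * g) n" .
qed

lemma fls_is_fps_dmap: "fls_is_fps f \<Longrightarrow> fls_is_fps (fls_dmap \<delta> f)"
  by (simp add: fls_is_fps_def)

lemma fls_even_dmap: "fls_even f \<Longrightarrow> fls_even (fls_dmap \<delta> f)"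
  by (simp add: fls_even_def)

lemma fls_subst_sq_dmap: "fls_subst_sq (fls_dmap \<delta> f) = fls_dmap \<delta> (fls_subst_sq f)"
  by (rule fls_eqI) (simp add: fls_subst_sq_nth)

end

locale differential_subring =
  fixes \<delta> :: "'r::comm_ring_1 \<Rightarrow> 'r" and S :: "'r set"
  assumes one_mem: "1 \<in> S"
    and uminus_mem: "a \<in> S \<Longrightarrow> - a \<in> S"
    and add_mem: "a \<in> S \<Longrightarrow> b \<in> S \<Longrightarrow> a + b \<in> S"
    and mult_mem: "a \<in> S \<Longrightarrow> b \<in> S \<Longrightarrow> a * b \<in> S"
    and deriv_mem: "a \<in> S \<Longrightarrow> \<delta> a \<in> S"
begin

lemma zero_mem: "0 \<in> S"
  using add_mem[OF one_mem uminus_mem[OF one_mem]] by simp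

lemma diff_mem: "a \<in> S \<Longrightarrow> b \<in> S \<Longrightarrow> a - b \<in> S"
  using add_mem[OF _ uminus_mem, of a b] by simp

lemma numeral_mem: "numeral k \<in> S"
proof -
  have "of_nat m \<in> S" for m
    by (induction m) (auto intro: zero_mem one_mem add_mem)
  then show ?thesis by (metis of_nat_numeral)
qed

lemma sum_mem: "(\<And>i. i \<in> A \<Longrightarrow> f i \<in> S) \<Longrightarrow> sum f A \<in> S"
  by (induction A rule: infinite_finite_induct) (auto intro: zero_mem add_mem)

lemma fls_times_nth_mem:
  assumes "fls_is_fps F" "fls_is_fps G"
    and "\<And>j. j < n \<Longrightarrow> fls_nth F j \<in> S" "\<And>j. j < n \<Longrightarrow> fls_nth G j \<in> S" and "m < n"
  shows "fls_nth (F * G) m \<in> S"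
  unfolding fls_is_fps_times_nth[OF assms(1,2)]
  using assms(3-5) by (intro sum_mem mult_mem) auto

end

section \<open>The equation for \<open>b\<close>\<close>

locale resolvent_setting = derivation \<delta> for \<delta> :: "'r::comm_ring_1 \<Rightarrow> 'r" +
  fixes u half :: 'r
  assumes two_half: "2 * half = 1"
begin

lemma half_squared_times_four: "half\<^sup>2 * 4 = 1"
proof -
  have "half\<^sup>2 * 4 = (2 * half) * (2 * half)"
    by (simp add: power2_eq_square algebra_simps)
  then show ?thesis
    using two_half by simp
qed

lemma fls_two_half: "2 * fls_const half = 1"
  by (metis fls_const_1 fls_const_mult_const fls_const_numeral two_half)

definition resolvent_eq :: "'r fls \<Rightarrow> bool" where
  "resolvent_eq b \<longleftrightarrow> b * fls_dmap \<delta> (fls_dmap \<delta> b) - fls_const half * (fls_dmap \<delta> b)\<^sup>2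
      - 2 * (fls_X_inv - 2 * fls_const u) * b\<^sup>2 = - 2 * fls_X_inv"

text \<open>The coefficient of \<open>\<lambda>\<^sup>1\<^sup>-\<^sup>n\<close> in \<open>resolvent_eq b\<close> is \<open>4 b\<^sub>n - resolvent_rhs b n\<close>, and
  \<open>resolvent_rhs b n\<close> only involves the \<open>b\<^sub>j\<close> with \<open>j < n\<close>.\<close>

definition resolvent_rhs :: "'r fls \<Rightarrow> int \<Rightarrow> 'r" where
  "resolvent_rhs b n = fls_nth (b * fls_dmap \<delta> (fls_dmap \<delta> b)) (n - 1)
     - half * fls_nth (fls_dmap \<delta> b * fls_dmap \<delta> b) (n - 1)
     + 4 * u * fls_nth (b * b) (n - 1) - 2 * (\<Sum>i=1..n-1. fls_nth b i * fls_nth b (n - i))"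

lemma resolvent_eq_nth:
  assumes "fls_is_fps b" "fls_nth b 0 = 1" "resolvent_eq b" and "0 < n"
  shows "fls_nth b n = half\<^sup>2 * resolvent_rhs b n"
proof -
  define S where "S = (\<Sum>i=1..n-1. fls_nth b i * fls_nth b (n - i))"
  have "{0..n} = insert 0 (insert n {1..n-1})"
    using \<open>0 < n\<close> by auto
  then have bb: "fls_nth (b * b) n = 2 * fls_nth b n + S"
    using \<open>0 < n\<close> assms(2) unfolding fls_is_fps_times_nth[OF assms(1,1)] S_def by simp
  have "b * fls_dmap \<delta> (fls_dmap \<delta> b) - fls_const half * (fls_dmap \<delta> b * fls_dmap \<delta> b)
      - 2 * (fls_X_inv * (b * b)) + 4 * (fls_const u * (b * b)) = - 2 * fls_X_inv"
    using assms(3) unfolding resolvent_eq_def by (simp add: power2_eq_square algebra_simps)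
  then have "fls_nth (b * fls_dmap \<delta> (fls_dmap \<delta> b)) (n - 1)
      - half * fls_nth (fls_dmap \<delta> b * fls_dmap \<delta> b) (n - 1)
      - 2 * fls_nth (b * b) n + 4 * (u * fls_nth (b * b) (n - 1)) = 0"
    using \<open>0 < n\<close> by (auto dest: arg_cong[where f = "\<lambda>f. fls_nth f (n - 1)"] simp: fls_X_inv_times_nth)
  then have "4 * fls_nth b n = resolvent_rhs b n"
    unfolding resolvent_rhs_def bb S_def[symmetric] by (simp add: algebra_simps)
  then show ?thesis
    using half_squared_times_four by (metis mult.assoc mult_1)
qed

lemma resolvent_rhs_cong:
  assumes "fls_is_fps b" "fls_is_fps c" and "\<And>j. j < n \<Longrightarrow> fls_nth b j = fls_nth c j"
  shows "resolvent_rhs b n = resolvent_rhs c n"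
proof -
  have fps: "fls_is_fps (fls_dmap \<delta> b)" "fls_is_fps (fls_dmap \<delta> (fls_dmap \<delta> b))"
    "fls_is_fps (fls_dmap \<delta> c)" "fls_is_fps (fls_dmap \<delta> (fls_dmap \<delta> c))"
    using assms(1,2) by (simp_all add: fls_is_fps_dmap)
  have "fls_nth (b * fls_dmap \<delta> (fls_dmap \<delta> b)) (n - 1) = fls_nth (c * fls_dmap \<delta> (fls_dmap \<delta> c)) (n - 1)"
    "fls_nth (fls_dmap \<delta> b * fls_dmap \<delta> b) (n - 1) = fls_nth (fls_dmap \<delta> c * fls_dmap \<delta> c) (n - 1)"
    "fls_nth (b * b) (n - 1) = fls_nth (c * c) (n - 1)"
    using assms fps by (auto intro!: fls_is_fps_times_nth_cong[where n = n])
  moreover have "(\<Sum>i=1..n-1. fls_nth b i * fls_nth b (n - i)) = (\<Sum>i=1..n-1. fls_nth c i * fls_nth c (n - i))"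
    using assms(3) by (intro sum.cong) auto
  ultimately show ?thesis
    unfolding resolvent_rhs_def by simp
qed

lemma resolvent_eq_unique:
  assumes b: "fls_is_fps b" "fls_nth b 0 = 1" "resolvent_eq b"
    and c: "fls_is_fps c" "fls_nth c 0 = 1" "resolvent_eq c"
  shows "b = c"
proof (rule fls_eqI)
  fix n
  show "fls_nth b n = fls_nth c n"
  proof (induction n rule: int_nonneg_less_induct)
    case (neg n)
    then show ?case using b(1) c(1) by (simp add: fls_is_fps_def)
  next
    case (nonneg n)
    show ?case
    proof (cases "n = 0")
      case False
      then have "0 < n" using nonneg.hyps by simp
      then show ?thesis
        using resolvent_eq_nth[OF b] resolvent_eq_nth[OF c] resolvent_rhs_cong[OF b(1) c(1) nonneg.IH]
        by simp
    qed (simp add: b(2) c(2))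
  qed
qed

lemma resolvent_rhs_mem:
  assumes "differential_subring \<delta> S" "u \<in> S" "half \<in> S"
    and "fls_is_fps b" and b_mem: "\<And>j. j < n \<Longrightarrow> fls_nth b j \<in> S"
  shows "resolvent_rhs b n \<in> S"
proof -
  interpret S: differential_subring \<delta> S by fact
  have fps: "fls_is_fps (fls_dmap \<delta> b)" "fls_is_fps (fls_dmap \<delta> (fls_dmap \<delta> b))"
    using assms(4) by (simp_all add: fls_is_fps_dmap)
  have d_mem: "fls_nth (fls_dmap \<delta> b) j \<in> S" "fls_nth (fls_dmap \<delta> (fls_dmap \<delta> b)) j \<in> S" if "j < n" for j
    using b_mem[OF that] by (simp_all add: S.deriv_mem)
  have "fls_nth (b * fls_dmap \<delta> (fls_dmap \<delta> b)) (n - 1) \<in> S"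
    "fls_nth (fls_dmap \<delta> b * fls_dmap \<delta> b) (n - 1) \<in> S"
    "fls_nth (b * b) (n - 1) \<in> S"
    by (rule S.fls_times_nth_mem[where n = n]; use assms(4) fps b_mem d_mem in simp)+
  moreover have "(\<Sum>i=1..n-1. fls_nth b i * fls_nth b (n - i)) \<in> S"
    by (intro S.sum_mem S.mult_mem b_mem) auto
  ultimately show ?thesis
    unfolding resolvent_rhs_def using assms(2,3)
    by (intro S.diff_mem S.add_mem S.mult_mem S.numeral_mem)
qed

lemma resolvent_eq_nth_mem:
  assumes S: "differential_subring \<delta> S" "u \<in> S" "half \<in> S"
    and b: "fls_is_fps b" "fls_nth b 0 = 1" "resolvent_eq b"
  shows "fls_nth b n \<in> S"
proof (induction n rule: int_nonneg_less_induct)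
  case (neg n)
  then show ?case
    using b(1) differential_subring.zero_mem[OF S(1)] by (simp add: fls_is_fps_def)
next
  case (nonneg n)
  show ?case
  proof (cases "n = 0")
    case False
    then have "0 < n" using nonneg.hyps by simp
    have "half\<^sup>2 * resolvent_rhs b n \<in> S"
      unfolding power2_eq_square using S resolvent_rhs_mem[OF S b(1) nonneg.IH]
      by (intro differential_subring.mult_mem[OF S(1)])
    then show ?thesis
      using resolvent_eq_nth[OF b \<open>0 < n\<close>] by simp
  qed (simp add: b(2) differential_subring.one_mem[OF S(1)])
qed

lemma kdv_b_eqI:
  assumes "differential_subring \<delta> S" "u \<in> S" "\<kappa> (1/2) = half" "half \<in> S"
    and b: "fls_is_fps b" "fls_nth b 0 = 1" "resolvent_eq b"
  shows "kdv_b \<delta> \<kappa> S u = b"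
  unfolding kdv_b_def
proof (rule the_equality)
  have "fls_nth b n \<in> S" for n
    using assms by (intro resolvent_eq_nth_mem)
  then show "(\<forall>n. fls_nth b n \<in> S) \<and> (\<forall>n<0. fls_nth b n = 0) \<and> fls_nth b 0 = 1 \<and>
      b * fls_dmap \<delta> (fls_dmap \<delta> b) - fls_const (\<kappa> (1/2)) * (fls_dmap \<delta> b)\<^sup>2
        - 2 * (fls_X_inv - 2 * fls_const u) * b\<^sup>2 = - 2 * fls_X_inv"
    using b \<open>\<kappa> (1/2) = half\<close> unfolding fls_is_fps_def resolvent_eq_def by simp
next
  fix c
  assume "(\<forall>n. fls_nth c n \<in> S) \<and> (\<forall>n<0. fls_nth c n = 0) \<and> fls_nth c 0 = 1 \<and>
      c * fls_dmap \<delta> (fls_dmap \<delta> c) - fls_const (\<kappa> (1/2)) * (fls_dmap \<delta> c)\<^sup>2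
        - 2 * (fls_X_inv - 2 * fls_const u) * c\<^sup>2 = - 2 * fls_X_inv"
  then have "fls_is_fps c" "fls_nth c 0 = 1" "resolvent_eq c"
    using \<open>\<kappa> (1/2) = half\<close> unfolding fls_is_fps_def resolvent_eq_def by simp_all
  then show "c = b"
    using resolvent_eq_unique[OF _ _ _ b] by simp
qed

end

section \<open>Pairs of wave functions\<close>

locale wave_pair = resolvent_setting \<delta> u half
  for \<delta> :: "'r::comm_ring_1 \<Rightarrow> 'r" and u half :: 'r +
  fixes w ws :: "'r fls"
  assumes w_fps: "fls_is_fps w" and w_nth_0: "fls_nth w 0 = 1"
    and ws_fps: "fls_is_fps ws" and ws_nth_0: "fls_nth ws 0 = 1"
    and L_w: "shift_op \<delta> fls_X_inv (shift_op \<delta> fls_X_inv w) + fls_const (2 * u) * w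
      = fls_X_inv\<^sup>2 * w"
    and L_ws: "shift_op \<delta> (- fls_X_inv) (shift_op \<delta> (- fls_X_inv) ws) + fls_const (2 * u) * ws
      = fls_X_inv\<^sup>2 * ws"
    and residue_pairing: "\<And>i. fls_nth ((shift_op \<delta> fls_X_inv ^^ i) w * ws) 1 = 0"
begin

abbreviation z :: "'r fls" where "z \<equiv> fls_X_inv"
abbreviation dm :: "'r fls \<Rightarrow> 'r fls" where "dm \<equiv> fls_dmap \<delta>"
abbreviation dx :: "'r fls \<Rightarrow> 'r fls" where "dx \<equiv> shift_op \<delta> z"

lemma dx_add: "dx (F + G) = dx F + dx G"
  by (simp add: shift_op_def algebra_simps)

lemma dx_power_add: "(dx ^^ j) (F + G) = (dx ^^ j) F + (dx ^^ j) G"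
  by (induction j) (simp_all add: dx_add)

lemma dx_const_times: "dx (fls_const a * F) = fls_const (\<delta> a) * F + fls_const a * dx F"
  by (simp add: shift_op_def fls_dmap_mult algebra_simps)

lemma dx_power_X_inv_power2_times: "(dx ^^ j) (z\<^sup>2 * F) = z\<^sup>2 * (dx ^^ j) F"
  by (induction j) (simp_all add: shift_op_def algebra_simps)

text \<open>\<open>dx\<close> is \<open>\<partial>\<^sub>x\<close> conjugated by \<open>e\<^sup>\<xi>\<close>, so \<open>wave_span\<close> is the span over the coefficient ring of
  the \<open>\<partial>\<^sup>j \<psi>\<close> with the exponential stripped.\<close>

inductive_set wave_span :: "'r fls set" where
  dx_power_in: "(dx ^^ j) w \<in> wave_span"
| zero_in: "0 \<in> wave_span"
| add_in: "F \<in> wave_span \<Longrightarrow> G \<in> wave_span \<Longrightarrow> F + G \<in> wave_span"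
| const_times_in: "F \<in> wave_span \<Longrightarrow> fls_const a * F \<in> wave_span"

lemma dx_wave_span: "F \<in> wave_span \<Longrightarrow> dx F \<in> wave_span"
proof (induction rule: wave_span.induct)
  case (dx_power_in j)
  then show ?case using wave_span.dx_power_in[of "Suc j"] by simp
next
  case zero_in
  then show ?case by (simp add: shift_op_def wave_span.zero_in)
next
  case (add_in F G)
  then show ?case by (simp add: dx_add wave_span.add_in)
next
  case (const_times_in F a)
  then show ?case by (simp add: dx_const_times wave_span.add_in wave_span.const_times_in)
qed

lemma dx_power_wave_span: "F \<in> wave_span \<Longrightarrow> (dx ^^ j) F \<in> wave_span"
  by (induction j) (simp_all add: dx_wave_span)

lemma X_inv_power2_times_wave_span: "F \<in> wave_span \<Longrightarrow> z\<^sup>2 * F \<in> wave_span"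
proof (induction rule: wave_span.induct)
  case (dx_power_in j)
  have "z\<^sup>2 * (dx ^^ j) w = (dx ^^ j) ((dx ^^ 2) w) + (dx ^^ j) (fls_const (2 * u) * w)"
    unfolding dx_power_X_inv_power2_times[symmetric] L_w[symmetric] dx_power_add
    by (simp add: numeral_2_eq_2)
  moreover have "w \<in> wave_span"
    using wave_span.dx_power_in[of 0] by simp
  ultimately show ?case
    by (auto intro: wave_span.intros dx_power_wave_span)
next
  case zero_in
  then show ?case by (simp add: wave_span.zero_in)
next
  case (add_in F G)
  then show ?case by (simp add: distrib_left wave_span.add_in)
next
  case (const_times_in F a)
  then show ?case by (simp add: mult.left_commute[of "z\<^sup>2"] wave_span.const_times_in)
qed

lemma wave_span_times_nth_odd:
  assumes "F \<in> wave_span" and "odd n" "0 < n"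
  shows "fls_nth (F * ws) n = 0"
proof -
  have "fls_nth (F * ws) (1 + 2 * int m) = 0" if "F \<in> wave_span" for m F
    using that
  proof (induction m arbitrary: F)
    case 0
    then show ?case
      by (induction rule: wave_span.induct) (simp_all add: residue_pairing distrib_right mult.assoc)
  next
    case (Suc m)
    have "fls_nth (F * ws) (1 + 2 * int (Suc m)) = fls_nth (z\<^sup>2 * F * ws) (1 + 2 * int m)"
      using fls_X_inv_power_times_nth[of 2 "F * ws"] by (simp add: algebra_simps)
    then show ?case
      using Suc X_inv_power2_times_wave_span by simp
  qed
  moreover obtain k where "n = 2 * k + 1"
    using \<open>odd n\<close> by (rule oddE)
  then have "n = 1 + 2 * int (nat k)"
    using \<open>0 < n\<close> by simp
  ultimately show ?thesis
    using assms(1) by metis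
qed

definition w_x :: "'r fls" where "w_x = dx w"
definition ws_x :: "'r fls" where "ws_x = shift_op \<delta> (- z) ws"
definition ww :: "'r fls" where "ww = w * ws"
definition wronskian :: "'r fls" where "wronskian = ws * w_x - w * ws_x"

lemma ww_fps: "fls_is_fps ww"
  unfolding ww_def by (rule fls_is_fps_times[OF w_fps ws_fps])

lemma ww_nth_0: "fls_nth ww 0 = 1"
  unfolding ww_def by (simp add: fls_is_fps_times_nth_0[OF w_fps ws_fps] w_nth_0 ws_nth_0)

lemma ww_even: "fls_even ww"
  unfolding fls_even_def
proof (intro allI impI)
  fix n :: int
  assume "odd n"
  show "fls_nth ww n = 0"
  proof (cases "0 < n")
    case True
    then show ?thesis
      using wave_span_times_nth_odd[OF wave_span.dx_power_in[of 0] \<open>odd n\<close>] by (simp add: ww_def)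
  next
    case False
    with \<open>odd n\<close> have "n < 0" by (cases "n = 0") auto
    then show ?thesis using ww_fps by (simp add: fls_is_fps_def)
  qed
qed

lemma w_x_times_ws_nth_odd: "odd n \<Longrightarrow> 0 < n \<Longrightarrow> fls_nth (w_x * ws) n = 0"
  using wave_span_times_nth_odd[OF wave_span.dx_power_in[of 1]] by (simp add: w_x_def)

lemma dm_w: "dm w = w_x - z * w"
  by (simp add: w_x_def shift_op_def)

lemma dm_ws: "dm ws = ws_x + z * ws"
  by (simp add: ws_x_def shift_op_def)

lemma dm_ww: "dm ww = w_x * ws + w * ws_x"
proof -
  have "dm ww = w * dm ws + dm w * ws"
    unfolding ww_def by (rule fls_dmap_mult)
  then show ?thesis
    unfolding dm_w dm_ws by (simp add: algebra_simps)
qed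

lemma dm_w_x: "dm w_x = z\<^sup>2 * w - 2 * fls_const u * w - z * w_x"
  using L_w unfolding w_x_def[symmetric] fls_const_numeral_times by (simp add: shift_op_def algebra_simps)

lemma dm_ws_x: "dm ws_x = z\<^sup>2 * ws - 2 * fls_const u * ws + z * ws_x"
  using L_ws unfolding ws_x_def[symmetric] fls_const_numeral_times by (simp add: shift_op_def algebra_simps)

lemma dm_dm_ww: "dm (dm ww) = 2 * z\<^sup>2 * ww - 4 * fls_const u * ww + 2 * w_x * ws_x"
proof -
  have "dm (dm ww) = dm w_x * ws + w_x * dm ws + (dm w * ws_x + w * dm ws_x)"
    unfolding dm_ww fls_dmap_add fls_dmap_mult by (simp add: algebra_simps)
  then show ?thesis
    unfolding dm_w dm_ws dm_w_x dm_ws_x ww_def by (simp add: algebra_simps power2_eq_square)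
qed

lemma riccati_wronskian:
  "ww * dm (dm ww) - fls_const half * (dm ww)\<^sup>2 - 2 * (z\<^sup>2 - 2 * fls_const u) * ww\<^sup>2
    = - fls_const half * wronskian\<^sup>2"
proof -
  have "ww * dm (dm ww) - fls_const half * (dm ww)\<^sup>2 - 2 * (z\<^sup>2 - 2 * fls_const u) * ww\<^sup>2
      = - fls_const half * wronskian\<^sup>2 - 2 * (w_x * ws) * (w * ws_x) * (2 * fls_const half - 1)"
    unfolding dm_dm_ww unfolding dm_ww unfolding wronskian_def ww_def by (simp add: algebra_simps power2_eq_square)
  then show ?thesis
    using fls_two_half by simp
qed

lemma wronskian_nth_neg: "n < 0 \<Longrightarrow> fls_nth wronskian n = 2 * fls_nth ww (n + 1)"
proof -
  assume "n < 0"
  have "wronskian = 2 * (dm w * ws + z * ww) - dm ww"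
    unfolding dm_ww unfolding dm_w wronskian_def ww_def by (simp add: algebra_simps)
  moreover have "fls_nth (dm w * ws) n = 0"
    using fls_is_fps_times[OF fls_is_fps_dmap[OF w_fps] ws_fps] \<open>n < 0\<close> by (simp add: fls_is_fps_def)
  ultimately show ?thesis
    using ww_fps \<open>n < 0\<close> by (simp add: fls_X_inv_times_nth fls_is_fps_def)
qed

text \<open>The Riccati identity makes \<open>wronskian\<^sup>2\<close> even, while \<open>wronskian - 2 z\<close> is an even power
  series; comparing the odd coefficients of \<open>wronskian\<^sup>2 = 4 z\<^sup>2 + 4 z E + E\<^sup>2\<close> then forces \<open>E = 0\<close>.\<close>

lemma wronskian_eq: "wronskian = 2 * z"
proof -
  define E where "E = wronskian - 2 * z"
  have "fls_even (ww * dm (dm ww) - fls_const half * (dm ww)\<^sup>2 - 2 * (z\<^sup>2 - 2 * fls_const u) * ww\<^sup>2)"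
    by (intro fls_even_diff fls_even_mult fls_even_dmap fls_even_power2 fls_even_const fls_even_numeral
        fls_even_X_inv_power2 ww_even)
  then have "fls_even (- (2 * (- fls_const half * wronskian\<^sup>2)))"
    unfolding riccati_wronskian by (rule fls_even_uminus[OF fls_even_mult[OF fls_even_numeral]])
  moreover have "- (2 * (- fls_const half * wronskian\<^sup>2)) = (2 * fls_const half) * wronskian\<^sup>2"
    by (simp add: algebra_simps)
  ultimately have W2: "fls_even (wronskian\<^sup>2)"
    unfolding fls_two_half by simp
  have "fls_even E"
    unfolding fls_even_def
  proof (intro allI impI)
    fix n :: int
    assume "odd n"
    show "fls_nth E n = 0"
    proof (cases "0 < n")
      case True
      have "wronskian = 2 * (w_x * ws) - dm ww"
        unfolding dm_ww wronskian_def by (simp add: algebra_simps)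
      then show ?thesis
        using True \<open>odd n\<close> w_x_times_ws_nth_odd ww_even by (simp add: E_def fls_even_def)
    next
      case False
      with \<open>odd n\<close> have "n < 0" by (cases "n = 0") auto
      then show ?thesis
        using wronskian_nth_neg[OF \<open>n < 0\<close>] ww_fps ww_nth_0 by (simp add: E_def fls_is_fps_def)
    qed
  qed
  have "z * E = (fls_const (half\<^sup>2) * 4) * (z * E)"
    using half_squared_times_four by (metis fls_const_1 fls_const_mult_const fls_const_numeral mult_1)
  also have "\<dots> = fls_const (half\<^sup>2) * (wronskian\<^sup>2 - 4 * z\<^sup>2 - E\<^sup>2)"
    unfolding E_def by (simp add: algebra_simps power2_eq_square)
  finally have "fls_even (z * E)"
    by (simp only:) (intro fls_even_mult fls_even_diff fls_even_const fls_even_numeral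
        fls_even_X_inv_power2 W2 fls_even_power2[OF \<open>fls_even E\<close>])
  then have "E = 0"
    using \<open>fls_even E\<close> by (rule fls_even_X_inv_times_imp_eq_0)
  then show ?thesis
    by (simp add: E_def)
qed

lemma riccati_ww:
  "ww * dm (dm ww) - fls_const half * (dm ww)\<^sup>2 - 2 * (z\<^sup>2 - 2 * fls_const u) * ww\<^sup>2 = - 2 * z\<^sup>2"
proof -
  have "- fls_const half * (2 * z)\<^sup>2 = - (2 * fls_const half) * (2 * z\<^sup>2)"
    by (simp add: algebra_simps power2_eq_square)
  then show ?thesis
    unfolding riccati_wronskian wronskian_eq fls_two_half by simp
qed

lemma fls_subst_sq_sqrt_ww: "fls_subst_sq (fls_subst_sqrt ww) = ww"
  by (rule fls_subst_sq_sqrt[OF ww_even])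

lemma resolvent_eq_sqrt_ww: "resolvent_eq (fls_subst_sqrt ww)"
  unfolding resolvent_eq_def
proof (rule fls_subst_sq_inject)
  let ?b = "fls_subst_sqrt ww"
  show "fls_subst_sq (?b * dm (dm ?b) - fls_const half * (dm ?b)\<^sup>2 - 2 * (z - 2 * fls_const u) * ?b\<^sup>2)
      = fls_subst_sq (- 2 * z)"
    by (simp only: fls_subst_sq_diff fls_subst_sq_mult fls_subst_sq_power2 fls_subst_sq_dmap
        fls_subst_sq_const fls_subst_sq_numeral fls_subst_sq_X_inv fls_subst_sq_uminus
        fls_subst_sq_sqrt_ww riccati_ww)
qed

lemma fls_is_fps_sqrt_ww: "fls_is_fps (fls_subst_sqrt ww)"
  using ww_fps by (simp add: fls_is_fps_def fls_subst_sqrt_nth)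

lemma sqrt_ww_nth_0: "fls_nth (fls_subst_sqrt ww) 0 = 1"
  by (simp add: fls_subst_sqrt_nth ww_nth_0)

lemma wave_matrix_eq: "wave_matrix \<delta> w ws = mat2 w ws (- w_x) (- ws_x)"
  by (simp add: wave_matrix_def w_x_def ws_x_def)

lemma det_wave_matrix: "det (wave_matrix \<delta> w ws) = 2 * z"
  using wronskian_eq unfolding wave_matrix_eq det_mat2 wronskian_def by (simp add: algebra_simps)

lemma wave_matrix_invertible: "invertible (wave_matrix \<delta> w ws)"
proof -
  define s where "s = fls_const half * fls_X"
  have "s * det (wave_matrix \<delta> w ws) = (2 * fls_const half) * (fls_X_inv * fls_X)"
    unfolding det_wave_matrix s_def by (simp add: algebra_simps)
  then have "s * (w * - ws_x - ws * - w_x) = 1"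
    unfolding fls_two_half fls_X_inv_times_X wave_matrix_eq det_mat2 by simp
  then show ?thesis
    unfolding invertible_def wave_matrix_eq by (blast intro: mat2_adjugate_inverse)
qed

text \<open>Instead of computing \<open>matrix_inv\<close>, the resolvent formula is checked in the form
  \<open>R \<Psi> = - \<Psi> diag(z, -z)\<close>; each entry is a combination of \<open>wronskian = 2 z\<close> and \<open>2 half = 1\<close>.\<close>

lemma resolvent_times_wave_matrix:
  "mat2 (fls_const half * dm ww) ww
      ((z\<^sup>2 - 2 * fls_const u) * ww - fls_const half * dm (dm ww)) (- fls_const half * dm ww)
    ** wave_matrix \<delta> w ws = - (wave_matrix \<delta> w ws ** mat2 z 0 0 (- z))"
proof -
  let ?K = "fls_const half"
  note W = wronskian_eq[unfolded wronskian_def] and K = fls_two_half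
  have "?K * (w_x * ws + w * ws_x) * w + w * ws * - w_x = - (w * z + ws * 0)"
    by (rule eq_of_linear_combination[OF W K, where c\<^sub>1 = "- ?K * w" and c\<^sub>2 = "w * ws * w_x - w * z"])
      (simp add: algebra_simps)
  moreover have "?K * (w_x * ws + w * ws_x) * ws + w * ws * - ws_x = - (w * 0 + ws * - z)"
    by (rule eq_of_linear_combination[OF W K, where c\<^sub>1 = "?K * ws" and c\<^sub>2 = "w * ws * ws_x + ws * z"])
      (simp add: algebra_simps)
  moreover have "((z\<^sup>2 - 2 * fls_const u) * (w * ws)
        - ?K * (2 * z\<^sup>2 * (w * ws) - 4 * fls_const u * (w * ws) + 2 * w_x * ws_x)) * w
      + - ?K * (w_x * ws + w * ws_x) * - w_x = - (- w_x * z + - ws_x * 0)"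
    by (rule eq_of_linear_combination[OF W K, where c\<^sub>1 = "?K * w_x"
          and c\<^sub>2 = "w_x * z - (z\<^sup>2 - 2 * fls_const u) * (w * ws) * w"])
      (simp add: algebra_simps power2_eq_square)
  moreover have "((z\<^sup>2 - 2 * fls_const u) * (w * ws)
        - ?K * (2 * z\<^sup>2 * (w * ws) - 4 * fls_const u * (w * ws) + 2 * w_x * ws_x)) * ws
      + - ?K * (w_x * ws + w * ws_x) * - ws_x = - (- w_x * 0 + - ws_x * - z)"
    by (rule eq_of_linear_combination[OF W K, where c\<^sub>1 = "- ?K * ws_x"
          and c\<^sub>2 = "- (z\<^sup>2 - 2 * fls_const u) * (w * ws) * ws - ws_x * z"])
      (simp add: algebra_simps power2_eq_square)
  ultimately show ?thesis
    unfolding wave_matrix_eq mat2_mult mat2_uminus mat2_eq_iff dm_dm_ww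
    unfolding dm_ww unfolding ww_def by simp
qed

lemma resolvent_conjugation:
  assumes "fls_subst_sq b = ww"
  shows "(\<chi> i j. fls_subst_sq (mat2 (fls_const half * dm b) b
      ((z - 2 * fls_const u) * b - fls_const half * dm (dm b)) (- fls_const half * dm b) $ i $ j))
    = - (wave_matrix \<delta> w ws ** mat2 z 0 0 (- z) ** matrix_inv (wave_matrix \<delta> w ws))"
    (is "?lhs = - (?\<Psi> ** ?D ** matrix_inv ?\<Psi>)")
proof -
  let ?R = "mat2 (fls_const half * dm ww) ww
      ((z\<^sup>2 - 2 * fls_const u) * ww - fls_const half * dm (dm ww)) (- fls_const half * dm ww)"
  have "?lhs = ?R"
    unfolding vec_lambda_mat2
    by (simp only: fls_subst_sq_diff fls_subst_sq_mult fls_subst_sq_uminus fls_subst_sq_dmap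
        fls_subst_sq_const fls_subst_sq_numeral fls_subst_sq_X_inv assms)
  also have "\<dots> = ?R ** (?\<Psi> ** matrix_inv ?\<Psi>)"
    by (simp add: matrix_mul_matrix_inv[OF wave_matrix_invertible])
  also have "\<dots> = - (?\<Psi> ** ?D ** matrix_inv ?\<Psi>)"
    by (simp only: matrix_mul_assoc resolvent_times_wave_matrix matrix_mul_uminus_left)
  finally show ?thesis .
qed

end

section \<open>The coefficient algebra \<open>V[[t]]\<close>\<close>

lemma kdvL_nth: "fls_nth (kdvL u) n = (if n = -2 then 1 else if n = 0 then 2 * u else 0)"
  unfolding kdvL_def pd_of_def by (subst nth_Abs_fls) (auto simp: MOST_nat intro!: exI[of _ 2])

lemma pd_top_kdvL: "(1::'r::comm_ring_1) \<noteq> 0 \<Longrightarrow> pd_top (kdvL (u::'r)) = 2"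
  unfolding pd_top_def by (subst fls_subdegree_eqI[of _ "-2"]) (auto simp: kdvL_nth)

lemma conj_apply_kdvL:
  fixes u :: "'r::comm_ring_1"
  shows "conj_apply d c (kdvL u) w = shift_op d c (shift_op d c w) + fls_const (2 * u) * w"
proof (cases "(1::'r) = 0")
  case True
  have zero: "x = 0" for x :: 'r
    using mult_1_right[of x] by (simp add: True)
  show ?thesis
    by (intro fls_eqI) (rule trans[OF zero zero[symmetric]])
next
  case False
  then have "{0..nat (pd_top (kdvL u))} = {0, 1, 2}"
    by (auto simp: pd_top_kdvL)
  then show ?thesis
    unfolding conj_apply_def by (simp add: pd_coeff_def kdvL_nth numeral_2_eq_2)
qed

lemma is_wave_pair_imp_wave_pair:
  assumes "derivation (D 0)" "2 * half = 1" and "is_wave_pair D \<kappa> u w ws"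
  shows "wave_pair (D 0) u half w ws"
proof -
  have w: "wave_eqs D \<kappa> u fls_X_inv w" and ws: "wave_eqs D \<kappa> u (- fls_X_inv) ws"
    and "\<And>i. fls_nth ((shift_op (D 0) fls_X_inv ^^ i) w * ws) 1 = 0"
    using assms(3) unfolding is_wave_pair_def is_wave_function_def by blast+
  then show ?thesis
    by (intro wave_pair.intro resolvent_setting.intro resolvent_setting_axioms.intro
        wave_pair_axioms.intro assms(1,2))
      (simp_all add: wave_eqs_def conj_apply_kdvL fls_is_fps_def)
qed

lemma derivation_coefficientwise:
  fixes \<Phi> :: "'r::comm_ring_1 \<Rightarrow> (nat \<Rightarrow>\<^sub>0 nat) \<Rightarrow> 'v::comm_ring_1"
  assumes "inj \<Phi>" and "derivation d"
    and \<Phi>_add: "\<And>a b. \<Phi> (a + b) = (\<lambda>\<alpha>. \<Phi> a \<alpha> + \<Phi> b \<alpha>)"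
    and \<Phi>_mult: "\<And>a b. \<Phi> (a * b) = ps_mult (\<Phi> a) (\<Phi> b)"
    and \<Phi>_\<delta>: "\<And>a. \<Phi> (\<delta> a) = ps_dx d (\<Phi> a)"
  shows "derivation \<delta>"
proof -
  interpret d: derivation d by fact
  show ?thesis
  proof
    show "\<delta> (a + b) = \<delta> a + \<delta> b" for a b
      by (rule injD[OF \<open>inj \<Phi>\<close>]) (simp add: \<Phi>_add \<Phi>_\<delta> ps_dx_def d.add fun_eq_iff)
    show "\<delta> (a * b) = a * \<delta> b + \<delta> a * b" for a b
      by (rule injD[OF \<open>inj \<Phi>\<close>])
        (simp add: \<Phi>_add \<Phi>_mult \<Phi>_\<delta> ps_dx_def ps_mult_def d.sum d.mult sum.distrib fun_eq_iff)
  qed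
qed

lemma two_kappa_half:
  fixes \<Phi> :: "'r::comm_ring_1 \<Rightarrow> (nat \<Rightarrow>\<^sub>0 nat) \<Rightarrow> 'v::comm_ring_1"
    and \<kappa> :: "complex \<Rightarrow> 'r" and \<iota> :: "complex \<Rightarrow> 'v"
  assumes "inj \<Phi>"
    and \<Phi>_add: "\<And>a b. \<Phi> (a + b) = (\<lambda>\<alpha>. \<Phi> a \<alpha> + \<Phi> b \<alpha>)"
    and \<Phi>_one: "\<Phi> 1 = ps_const 1"
    and \<Phi>_\<kappa>: "\<And>c. \<Phi> (\<kappa> c) = ps_const (\<iota> c)"
    and \<iota>_add: "\<And>a b. \<iota> (a + b) = \<iota> a + \<iota> b" and \<iota>_one: "\<iota> 1 = 1"
  shows "2 * \<kappa> (1/2) = 1"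
proof (rule injD[OF \<open>inj \<Phi>\<close>])
  have "\<iota> (1/2) + \<iota> (1/2) = 1"
    using \<iota>_add[of "1/2" "1/2"] \<iota>_one by simp
  then have "\<Phi> (\<kappa> (1/2) + \<kappa> (1/2)) = \<Phi> 1"
    unfolding \<Phi>_add \<Phi>_\<kappa> \<Phi>_one by (simp add: ps_const_def fun_eq_iff)
  then show "\<Phi> (2 * \<kappa> (1/2)) = \<Phi> 1"
    by (simp only: mult_2)
qed

lemma differential_subring_containing_scalars:
  fixes \<iota> :: "'a::ring_1 \<Rightarrow> 'v::comm_ring_1"
  assumes \<iota>_add: "\<And>a b. \<iota> (a + b) = \<iota> a + \<iota> b" and \<iota>_one: "\<iota> 1 = 1" and "range \<iota> \<subseteq> V"
    and "\<And>a b. a \<in> V \<Longrightarrow> b \<in> V \<Longrightarrow> a + b \<in> V" "\<And>a b. a \<in> V \<Longrightarrow> b \<in> V \<Longrightarrow> a * b \<in> V"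
    and "\<And>a. a \<in> V \<Longrightarrow> d a \<in> V"
  shows "differential_subring d V"
proof
  interpret \<iota>: additive \<iota> by unfold_locales (rule \<iota>_add)
  have "\<iota> 1 \<in> V"
    using \<open>range \<iota> \<subseteq> V\<close> by blast
  then show "1 \<in> V"
    by (simp only: \<iota>_one)
  show "- a \<in> V" if "a \<in> V" for a
  proof -
    have "\<iota> (-1) * a \<in> V"
      using assms(5) \<open>range \<iota> \<subseteq> V\<close> that by blast
    then show ?thesis
      using \<iota>.minus[of 1] \<iota>_one by simp
  qed
qed (fact assms(4-6))+

lemma differential_subring_coefficientwise:
  fixes \<Phi> :: "'r::comm_ring_1 \<Rightarrow> (nat \<Rightarrow>\<^sub>0 nat) \<Rightarrow> 'v::comm_ring_1"
  assumes "differential_subring d V"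
    and \<Phi>_add: "\<And>a b. \<Phi> (a + b) = (\<lambda>\<alpha>. \<Phi> a \<alpha> + \<Phi> b \<alpha>)"
    and \<Phi>_mult: "\<And>a b. \<Phi> (a * b) = ps_mult (\<Phi> a) (\<Phi> b)"
    and \<Phi>_one: "\<Phi> 1 = ps_const 1"
    and \<Phi>_\<delta>: "\<And>a. \<Phi> (\<delta> a) = ps_dx d (\<Phi> a)"
  shows "differential_subring \<delta> {a. \<forall>\<alpha>. \<Phi> a \<alpha> \<in> V}"
proof
  interpret V: differential_subring d V by fact
  have \<Phi>_uminus: "\<Phi> (- a) \<alpha> = - \<Phi> a \<alpha>" for a \<alpha>
  proof -
    interpret additive "\<lambda>a. \<Phi> a \<alpha>" by unfold_locales (simp add: \<Phi>_add)
    show ?thesis by (rule minus)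
  qed
  show "1 \<in> {a. \<forall>\<alpha>. \<Phi> a \<alpha> \<in> V}"
    by (simp add: \<Phi>_one ps_const_def V.one_mem V.zero_mem)
  show "- a \<in> {a. \<forall>\<alpha>. \<Phi> a \<alpha> \<in> V}" if "a \<in> {a. \<forall>\<alpha>. \<Phi> a \<alpha> \<in> V}" for a
    using that by (simp add: \<Phi>_uminus V.uminus_mem)
  show "a + b \<in> {a. \<forall>\<alpha>. \<Phi> a \<alpha> \<in> V}" if "a \<in> {a. \<forall>\<alpha>. \<Phi> a \<alpha> \<in> V}" "b \<in> {a. \<forall>\<alpha>. \<Phi> a \<alpha> \<in> V}" for a b
    using that by (simp add: \<Phi>_add V.add_mem)
  show "a * b \<in> {a. \<forall>\<alpha>. \<Phi> a \<alpha> \<in> V}" if "a \<in> {a. \<forall>\<alpha>. \<Phi> a \<alpha> \<in> V}" "b \<in> {a. \<forall>\<alpha>. \<Phi> a \<alpha> \<in> V}" for a b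
    using that by (simp add: \<Phi>_mult ps_mult_def V.sum_mem V.mult_mem)
  show "\<delta> a \<in> {a. \<forall>\<alpha>. \<Phi> a \<alpha> \<in> V}" if "a \<in> {a. \<forall>\<alpha>. \<Phi> a \<alpha> \<in> V}" for a
    using that by (simp add: \<Phi>_\<delta> ps_dx_def V.deriv_mem)
qed

theorem lemma3p4:
  fixes \<iota> :: "complex \<Rightarrow> 'v::comm_ring_1"
    and d :: "'v \<Rightarrow> 'v"
    and V :: "'v set"
    and \<Phi> :: "'r::comm_ring_1 \<Rightarrow> ((nat \<Rightarrow>\<^sub>0 nat) \<Rightarrow> 'v)"
    and \<kappa> :: "complex \<Rightarrow> 'r"
    and D :: "nat \<Rightarrow> 'r \<Rightarrow> 'r"
    and u :: 'r
    and w ws :: "'r fls"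
  assumes iota_add: "\<And>a b. \<iota> (a + b) = \<iota> a + \<iota> b"
    and iota_mult: "\<And>a b. \<iota> (a * b) = \<iota> a * \<iota> b"
    and iota_one: "\<iota> 1 = 1"
    and d_add: "\<And>a b. d (a + b) = d a + d b"
    and d_mult: "\<And>a b. d (a * b) = a * d b + d a * b"
    and d_const: "\<And>c. d (\<iota> c) = 0"
    and V_const: "range \<iota> \<subseteq> V"
    and V_add: "\<And>a b. a \<in> V \<Longrightarrow> b \<in> V \<Longrightarrow> a + b \<in> V"
    and V_mult: "\<And>a b. a \<in> V \<Longrightarrow> b \<in> V \<Longrightarrow> a * b \<in> V"
    and V_d: "\<And>a. a \<in> V \<Longrightarrow> d a \<in> V"
    and V_tilde: "V \<subseteq> range d"
    and Phi_bij: "bij \<Phi>"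
    and Phi_add: "\<And>a b. \<Phi> (a + b) = (\<lambda>\<alpha>. \<Phi> a \<alpha> + \<Phi> b \<alpha>)"
    and Phi_mult: "\<And>a b. \<Phi> (a * b) = ps_mult (\<Phi> a) (\<Phi> b)"
    and Phi_one: "\<Phi> 1 = ps_const 1"
    and Phi_kappa: "\<And>c. \<Phi> (\<kappa> c) = ps_const (\<iota> c)"
    and Phi_Dx: "\<And>a. \<Phi> (D 0 a) = ps_dx d (\<Phi> a)"
    and Phi_Dt: "\<And>k a. \<Phi> (D (Suc k) a) = ps_dt k (\<Phi> a)"
    and u_in: "\<forall>\<alpha>. \<Phi> u \<alpha> \<in> V"
    and kdv: "kdv_solution D \<kappa> u"
    and pair: "is_wave_pair D \<kappa> u w ws"
  shows "det (wave_matrix (D 0) w ws) = 2 * fls_X_inv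
    \<and> fls_subst_sq (kdv_b (D 0) \<kappa> {a. \<forall>\<alpha>. \<Phi> a \<alpha> \<in> V} u) = w * ws
    \<and> invertible (wave_matrix (D 0) w ws)
    \<and> (\<chi> i j. fls_subst_sq ((kdv_R (D 0) \<kappa> {a. \<forall>\<alpha>. \<Phi> a \<alpha> \<in> V} u) $ i $ j))
        = - (wave_matrix (D 0) w ws ** mat2 fls_X_inv 0 0 (- fls_X_inv)
               ** matrix_inv (wave_matrix (D 0) w ws))"
proof -
  let ?S = "{a. \<forall>\<alpha>. \<Phi> a \<alpha> \<in> V}"
  have "inj \<Phi>"
    using Phi_bij by (rule bij_is_inj)
  have "derivation d"
    by unfold_locales (fact d_add d_mult)+
  have D0: "derivation (D 0)"
    using \<open>inj \<Phi>\<close> \<open>derivation d\<close> Phi_add Phi_mult Phi_Dx by (rule derivation_coefficientwise)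
  have half: "2 * \<kappa> (1/2) = 1"
    using \<open>inj \<Phi>\<close> Phi_add Phi_one Phi_kappa iota_add iota_one by (rule two_kappa_half)
  have V: "differential_subring d V"
    using iota_add iota_one V_const V_add V_mult V_d by (rule differential_subring_containing_scalars)
  have S: "differential_subring (D 0) ?S"
    using V Phi_add Phi_mult Phi_one Phi_Dx by (rule differential_subring_coefficientwise)
  have "\<kappa> (1/2) \<in> ?S"
    using V_const differential_subring.zero_mem[OF V] by (auto simp: Phi_kappa ps_const_def)
  interpret wave_pair "D 0" u "\<kappa> (1/2)" w ws
    by (rule is_wave_pair_imp_wave_pair[OF D0 half pair])
  have b: "kdv_b (D 0) \<kappa> ?S u = fls_subst_sqrt ww"
    by (rule kdv_b_eqI[where \<kappa> = \<kappa>, OF S _ refl \<open>\<kappa> (1/2) \<in> ?S\<close> fls_is_fps_sqrt_ww sqrt_ww_nth_0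
          resolvent_eq_sqrt_ww]) (simp add: u_in)
  show ?thesis
    unfolding kdv_R_def Let_def b
    using det_wave_matrix fls_subst_sq_sqrt_ww wave_matrix_invertible
      resolvent_conjugation[OF fls_subst_sq_sqrt_ww]
    by (simp add: ww_def)
qed

end
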